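(* Let $X$ be a CFG-space over a Boolean ring $B$ and $Y\subseteq X$ (with the restricted metric). Then $Y$ is a CFG-space if and only if there exists a contractive map $f:X\to B$ such that $Y=f^{-1}(0)$.
   Context: $B$ is a Boolean ring ($a\vee b=a+b+ab$, $a\le b\iff ab=a$; $a_1\oplus\cdots\oplus a_n$ denotes a sum of pairwise disjoint elements); $B$ is itself regarded as a Boolean metric space with $d(a,b)=a+b$. A Boolean metric space over $B$: set $X$ with $d:X\times X\to B$, $d(x,y)=0\iff x=y$, symmetric, $d(x,z)\le d(x,y)\vee d(y,z)$. For $x_1,\dots,x_n\in X$, $a_i\in B$ with $a_1\oplus\cdots\oplus a_n=1$, $x$ is a convex combination of the $x_i$ with coefficients $a_i$ if $a_id(x,x_i)=0$ for all $i$. A CFG-space is a space in which all such combinations exist and every element is a convex combination of elements of some fixed finite subset (the empty space counts as a CFG-space). A map $f$ is contractive if $d(f(x),f(y))\le d(x,y)$ for all $x,y$. *)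

theory Defs
  imports Main
begin

definition boolean_ring :: "'b::comm_ring_1 itself \<Rightarrow> bool" where
  "boolean_ring _ \<longleftrightarrow> (\<forall>a::'b. a * a = a)"

definition bjoin :: "'b::comm_ring_1 \<Rightarrow> 'b \<Rightarrow> 'b" where
  "bjoin a b = a + b + a * b"

definition ble :: "'b::comm_ring_1 \<Rightarrow> 'b \<Rightarrow> bool" where
  "ble a b \<longleftrightarrow> a * b = a"

definition bool_metric_space :: "'a set \<Rightarrow> ('a \<Rightarrow> 'a \<Rightarrow> 'b::comm_ring_1) \<Rightarrow> bool" where
  "bool_metric_space X d \<longleftrightarrow>
     (\<forall>x\<in>X. \<forall>y\<in>X. (d x y = 0 \<longleftrightarrow> x = y)) \<and>
     (\<forall>x\<in>X. \<forall>y\<in>X. d x y = d y x) \<and>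
     (\<forall>x\<in>X. \<forall>y\<in>X. \<forall>z\<in>X. ble (d x z) (bjoin (d x y) (d y z)))"

definition disjoint_partition_unity :: "nat \<Rightarrow> (nat \<Rightarrow> 'b::comm_ring_1) \<Rightarrow> bool" where
  "disjoint_partition_unity n a \<longleftrightarrow>
     (\<forall>i<n. \<forall>j<n. i \<noteq> j \<longrightarrow> a i * a j = 0) \<and> (\<Sum>i<n. a i) = 1"

definition convex_comb :: "('a \<Rightarrow> 'a \<Rightarrow> 'b::comm_ring_1) \<Rightarrow> 'a \<Rightarrow> nat \<Rightarrow> (nat \<Rightarrow> 'a) \<Rightarrow> (nat \<Rightarrow> 'b) \<Rightarrow> bool" where
  "convex_comb d x n xs a \<longleftrightarrow> (\<forall>i<n. a i * d x (xs i) = 0)"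

definition CFG_space :: "'a set \<Rightarrow> ('a \<Rightarrow> 'a \<Rightarrow> 'b::comm_ring_1) \<Rightarrow> bool" where
  "CFG_space X d \<longleftrightarrow> bool_metric_space X d \<and>
     (X = {} \<or>
      ((\<forall>n xs a. (\<forall>i<n. xs i \<in> X) \<and> disjoint_partition_unity n a \<longrightarrow>
          (\<exists>x\<in>X. convex_comb d x n xs a)) \<and>
       (\<exists>S. finite S \<and> S \<subseteq> X \<and>
          (\<forall>x\<in>X. \<exists>n xs a. (\<forall>i<n. xs i \<in> S) \<and> disjoint_partition_unity n a \<and>
                          convex_comb d x n xs a))))"

text \<open>Contractive map X \<rightarrow> B, where B carries the metric d(a,b) = a + b.\<close>
definition contractive_to_B :: "'a set \<Rightarrow> ('a \<Rightarrow> 'a \<Rightarrow> 'b::comm_ring_1) \<Rightarrow> ('a \<Rightarrow> 'b) \<Rightarrow> bool" where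
  "contractive_to_B X d f \<longleftrightarrow> (\<forall>x\<in>X. \<forall>y\<in>X. ble (f x + f y) (d x y))"

end

theory Submission imports Defs begin

(* (=>) If Y is generated by t_0, ..., t_(k-1), the map f x = prod_i d(x, t_i)
   is contractive (for D = d(x,y) the complement 1 - D does not see the
   difference between d(x,t) and d(y,t)), vanishes on Y, and conversely
   f x = 0 yields the "telescoping" partition b_i = (prod_(l<i) d(x,t_l)) (1 - d(x,t_i))
   of unity; the corresponding combination y of the t_i lies in Y and d(x,y) = 0.

   (<=) If Y = f^-1(0), convex combinations of points of Y stay in Y, and every
   s in X has a "retraction" p(s) in Y, the combination of s and a fixed point of Y
   with coefficients 1 - f s and f s; images p(S) of generators S of X generate Y. *)

section \<open>Boolean ring arithmetic\<close>

lemma boolean_ring_idem: "boolean_ring TYPE('b::comm_ring_1) \<Longrightarrow> (a::'b) * a = a"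
  by (simp add: boolean_ring_def)

lemma boolean_ring_complement:
  assumes "boolean_ring TYPE('b::comm_ring_1)" shows "(1 - a) * (a::'b) = 0"
  using boolean_ring_idem[OF assms, of a] by (simp add: algebra_simps)

lemma boolean_ring_char_two:
  assumes br: "boolean_ring TYPE('b::comm_ring_1)" shows "(a::'b) + a = 0"
proof -
  have "(a + a) * (a + a) = a + a" using boolean_ring_idem[OF br] .
  hence "a * a + a * a + (a * a + a * a) = a + a" by (simp add: algebra_simps)
  hence "a + a + (a + a) = a + a" using boolean_ring_idem[OF br, of a] by simp
  thus ?thesis by simp
qed

lemma ble_annihilator:
  fixes w D a :: "'b::comm_ring_1"
  assumes "ble w D" and "a * D = 0" shows "a * w = 0"
proof -
  have "a * w = a * (w * D)" using assms(1) by (simp add: ble_def)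
  also have "\<dots> = w * (a * D)" by (simp add: ac_simps)
  finally show ?thesis using assms(2) by simp
qed

lemma bjoin_annihilator:
  fixes a u v :: "'b::comm_ring_1"
  assumes "a * u = 0" and "a * v = 0" shows "a * bjoin u v = 0"
proof -
  have "a * bjoin u v = a * u + a * v + (a * u) * v" by (simp add: bjoin_def algebra_simps)
  thus ?thesis using assms by simp
qed

lemma prod_mult_cong:
  fixes c :: "'b::comm_ring_1" and k :: nat
  assumes "\<And>i. i < k \<Longrightarrow> c * u i = c * v i"
  shows "c * (\<Prod>i<k. u i) = c * (\<Prod>i<k. v i)"
  using assms
proof (induction k)
  case 0 then show ?case by simp
next
  case (Suc k)
  have IH: "c * (\<Prod>i<k. u i) = c * (\<Prod>i<k. v i)" using Suc by simp
  have "c * (\<Prod>i<Suc k. u i) = (c * (\<Prod>i<k. u i)) * u k" by (simp add: algebra_simps)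
  also have "\<dots> = (\<Prod>i<k. v i) * (c * u k)" by (simp add: IH ac_simps)
  also have "\<dots> = (\<Prod>i<k. v i) * (c * v k)" by (simp only: Suc.prems[OF lessI])
  also have "\<dots> = c * (\<Prod>i<Suc k. v i)" by (simp add: algebra_simps)
  finally show ?case .
qed

section \<open>Partitions of unity\<close>

lemma partition_annihilator_zero:
  fixes c :: "'b::comm_ring_1"
  assumes "disjoint_partition_unity n a" and "\<And>i. i < n \<Longrightarrow> a i * c = 0"
  shows "c = 0"
proof -
  have "c = (\<Sum>i<n. a i) * c" using assms(1) by (simp add: disjoint_partition_unity_def)
  also have "\<dots> = (\<Sum>i<n. a i * c)" by (simp add: sum_distrib_right)
  also have "\<dots> = 0" using assms(2) by simp
  finally show ?thesis .
qed

lemma two_point_partition: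
  assumes "boolean_ring TYPE('b::comm_ring_1)"
  shows "disjoint_partition_unity 2 (\<lambda>i. if i = 0 then 1 - c else (c::'b))"
proof -
  have "(1 - c) * c = 0" using boolean_ring_complement[OF assms] .
  moreover have "\<And>i::nat. i < 2 \<longleftrightarrow> i = 0 \<or> i = 1" by auto
  ultimately show ?thesis unfolding disjoint_partition_unity_def
    by (auto simp: numeral_2_eq_2 algebra_simps)
qed

lemma telescoping_sum:
  fixes e :: "nat \<Rightarrow> 'b::comm_ring_1" and k :: nat
  shows "(\<Sum>i<k. (\<Prod>l<i. e l) * (1 - e i)) = 1 - (\<Prod>l<k. e l)"
  by (induction k) (simp_all add: algebra_simps)

lemma telescoping_disjoint:
  fixes e :: "nat \<Rightarrow> 'b::comm_ring_1"
  assumes br: "boolean_ring TYPE('b)" and ij: "i < j"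
  shows "((\<Prod>l<i. e l) * (1 - e i)) * ((\<Prod>l<j. e l) * (1 - e j)) = 0"
proof -
  have "(\<Prod>l<j. e l) = e i * (\<Prod>l\<in>{..<j}-{i}. e l)"
    using ij by (simp add: prod.remove)
  moreover have "(1 - e i) * e i = 0" using boolean_ring_complement[OF br] .
  ultimately show ?thesis
    by (metis (no_types, lifting) mult.assoc mult.left_commute mult_zero_left mult_zero_right)
qed

lemma telescoping_partition:
  fixes e :: "nat \<Rightarrow> 'b::comm_ring_1" and k :: nat
  assumes br: "boolean_ring TYPE('b)" and "(\<Prod>l<k. e l) = 0"
  shows "disjoint_partition_unity k (\<lambda>i. (\<Prod>l<i. e l) * (1 - e i))"
  unfolding disjoint_partition_unity_def
proof
  show "\<forall>i<k. \<forall>j<k. i \<noteq> j \<longrightarrow> ((\<Prod>l<i. e l) * (1 - e i)) * ((\<Prod>l<j. e l) * (1 - e j)) = 0"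
    using telescoping_disjoint[OF br] by (metis linorder_neqE_nat mult.commute)
  show "(\<Sum>i<k. (\<Prod>l<i. e l) * (1 - e i)) = 1"
    using assms(2) by (simp add: telescoping_sum)
qed

section \<open>Boolean metric spaces\<close>

lemma bool_metric_space_subset:
  "bool_metric_space X d \<Longrightarrow> Y \<subseteq> X \<Longrightarrow> bool_metric_space Y d"
  unfolding bool_metric_space_def by blast

lemma bool_metric_sym:
  "bool_metric_space X d \<Longrightarrow> x \<in> X \<Longrightarrow> y \<in> X \<Longrightarrow> d x y = d y x"
  unfolding bool_metric_space_def by blast

lemma annihilator_triangle:
  assumes "bool_metric_space X d" and "x \<in> X" "y \<in> X" "z \<in> X"
    and "a * d x y = 0" and "a * d y z = 0"
  shows "a * d x z = 0"
proof -
  have "ble (d x z) (bjoin (d x y) (d y z))"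
    using assms(1-4) by (simp add: bool_metric_space_def)
  thus ?thesis using ble_annihilator bjoin_annihilator assms(5,6) by blast
qed

lemma mutual_join_bounds:
  fixes D u v :: "'b::comm_ring_1"
  assumes br: "boolean_ring TYPE('b)"
    and uv: "ble u (bjoin D v)" and vu: "ble v (bjoin D u)"
  shows "(1 - D) * u = (1 - D) * v"
proof -
  have disj: "(1 - D) * D = 0" using boolean_ring_complement[OF br] .
  have "(1 - D) * u = (1 - D) * (u * (D + v + D * v))"
    using uv by (simp add: ble_def bjoin_def)
  also have "\<dots> = u * ((1 - D) * D) + (1 - D) * u * v + u * v * ((1 - D) * D)"
    by (simp add: algebra_simps)
  finally have u_part: "(1 - D) * u = (1 - D) * u * v" using disj by simp
  have "(1 - D) * v = (1 - D) * (v * (D + u + D * u))"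
    using vu by (simp add: ble_def bjoin_def)
  also have "\<dots> = v * ((1 - D) * D) + (1 - D) * u * v + u * v * ((1 - D) * D)"
    by (simp add: algebra_simps)
  finally have v_part: "(1 - D) * v = (1 - D) * u * v" using disj by simp
  show ?thesis using u_part v_part by simp
qed

lemma complement_distance_eq:
  fixes d :: "'a \<Rightarrow> 'a \<Rightarrow> 'b::comm_ring_1"
  assumes br: "boolean_ring TYPE('b)" and bm: "bool_metric_space X d"
    and X: "x \<in> X" "y \<in> X" "z \<in> X"
  shows "(1 - d x y) * d x z = (1 - d x y) * d y z"
proof (rule mutual_join_bounds[OF br])
  show "ble (d x z) (bjoin (d x y) (d y z))"
    using bm X by (simp add: bool_metric_space_def)
  have "ble (d y z) (bjoin (d y x) (d x z))"
    using bm X unfolding bool_metric_space_def by blast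
  thus "ble (d y z) (bjoin (d x y) (d x z))" using bool_metric_sym[OF bm X(1,2)] by simp
qed

lemma contractive_annihilator:
  assumes "contractive_to_B X d f" and "x \<in> X" "y \<in> X" "f y = 0" and "a * d x y = 0"
  shows "a * f x = 0"
  using assms ble_annihilator unfolding contractive_to_B_def by fastforce

definition has_convex_combinations :: "'a set \<Rightarrow> ('a \<Rightarrow> 'a \<Rightarrow> 'b::comm_ring_1) \<Rightarrow> bool" where
  "has_convex_combinations X d \<longleftrightarrow>
     (\<forall>n xs (a::nat \<Rightarrow> 'b). (\<forall>i<n. xs i \<in> X) \<and> disjoint_partition_unity n a \<longrightarrow>
        (\<exists>x\<in>X. convex_comb d x n xs a))"

definition generated_by :: "'a set \<Rightarrow> 'a set \<Rightarrow> ('a \<Rightarrow> 'a \<Rightarrow> 'b::comm_ring_1) \<Rightarrow> bool" where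
  "generated_by S X d \<longleftrightarrow>
     (\<forall>x\<in>X. \<exists>n xs (a::nat \<Rightarrow> 'b). (\<forall>i<n. xs i \<in> S) \<and> disjoint_partition_unity n a \<and>
        convex_comb d x n xs a)"

lemma has_convex_combinationsD:
  assumes "has_convex_combinations X d" and "\<forall>i<n. xs i \<in> X" and "disjoint_partition_unity n a"
  obtains x where "x \<in> X" and "convex_comb d x n xs a"
  using assms unfolding has_convex_combinations_def by blast

lemma generated_byD:
  assumes "generated_by S X d" and "x \<in> X"
  obtains n xs a where "\<forall>i<n. xs i \<in> S" and "disjoint_partition_unity n a"
    and "convex_comb d x n xs a"
  using assms unfolding generated_by_def by blast

lemma CFG_space_iff:
  "CFG_space X d \<longleftrightarrow> bool_metric_space X d \<and>
     (X = {} \<or> has_convex_combinations X d \<and> (\<exists>S. finite S \<and> S \<subseteq> X \<and> generated_by S X d))"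
  unfolding CFG_space_def has_convex_combinations_def generated_by_def by blast

section \<open>Zero sets of contractive maps are CFG-spaces\<close>

lemma zero_set_has_convex_combinations:
  assumes comb: "has_convex_combinations X d" and f: "contractive_to_B X d f"
  shows "has_convex_combinations {x\<in>X. f x = 0} d"
  unfolding has_convex_combinations_def
proof (intro allI impI)
  fix n xs and a :: "nat \<Rightarrow> 'b"
  assume h: "(\<forall>i<n. xs i \<in> {x\<in>X. f x = 0}) \<and> disjoint_partition_unity n a"
  have "\<forall>i<n. xs i \<in> X" using h by blast
  then obtain x where x: "x \<in> X" "convex_comb d x n xs a"
    using h by (blast elim: has_convex_combinationsD[OF comb])
  have "f x = 0"
  proof (rule partition_annihilator_zero)
    show "disjoint_partition_unity n a" using h by blast
    fix i assume i: "i < n"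
    show "a i * f x = 0"
    proof (rule contractive_annihilator[OF f x(1)])
      show "xs i \<in> X" "f (xs i) = 0" using h i by auto
      show "a i * d x (xs i) = 0" using x(2) i by (simp add: convex_comb_def)
    qed
  qed
  thus "\<exists>x\<in>{x\<in>X. f x = 0}. convex_comb d x n xs a" using x by blast
qed

text \<open>Retraction onto the zero set: mix \<open>s\<close> with a zero \<open>y\<^sub>0\<close> of \<open>f\<close> with weights \<open>1 - f s\<close> and \<open>f s\<close>.\<close>
lemma zero_set_retraction:
  fixes d :: "'a \<Rightarrow> 'a \<Rightarrow> 'b::comm_ring_1"
  assumes br: "boolean_ring TYPE('b)" and bm: "bool_metric_space X d"
    and comb: "has_convex_combinations X d" and f: "contractive_to_B X d f"
    and y0: "y0 \<in> X" "f y0 = 0" and s: "s \<in> X"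
  shows "\<exists>p. p \<in> X \<and> f p = 0 \<and> (1 - f s) * d s p = 0"
proof -
  let ?xs = "\<lambda>i::nat. if i = 0 then s else y0"
  let ?a = "\<lambda>i::nat. if i = 0 then 1 - f s else f s"
  have xs: "\<forall>i<2. ?xs i \<in> X" using s y0 by auto
  obtain p where p: "p \<in> X" "convex_comb d p 2 ?xs ?a"
    by (rule has_convex_combinationsD[OF comb xs two_point_partition[OF br, of "f s"]])
  hence mixed: "\<forall>i<2. ?a i * d p (?xs i) = 0" by (simp add: convex_comb_def)
  have "(1 - f s) * d p s = 0" using mixed[rule_format, of 0] by simp
  hence near_s: "(1 - f s) * d s p = 0" using bool_metric_sym[OF bm s p(1)] by simp
  have near_y0: "f s * d p y0 = 0" using mixed[rule_format, of 1] by simp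
  \<comment> \<open>\<open>f p\<close> vanishes on \<open>f s\<close> (near \<open>y\<^sub>0\<close>) and on \<open>1 - f s\<close> (near \<open>s\<close>, where \<open>f p = f s\<close>)\<close>
  have "f s * f p = 0" using contractive_annihilator[OF f p(1) y0 near_y0] .
  moreover have "(1 - f s) * (f s + f p) = 0"
    using near_s f s p(1) ble_annihilator unfolding contractive_to_B_def by blast
  ultimately have "f p = f s * f p + (1 - f s) * f p"
    and "(1 - f s) * f p = 0"
    using boolean_ring_complement[OF br, of "f s"] by (simp_all add: algebra_simps)
  hence "f p = 0" using \<open>f s * f p = 0\<close> by simp
  thus ?thesis using p(1) near_s by blast
qed

lemma zero_set_generated:
  assumes bm: "bool_metric_space X d" and f: "contractive_to_B X d f"
    and SX: "S \<subseteq> X" and gen: "generated_by S X d"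
    and p: "\<And>s. s \<in> S \<Longrightarrow> p s \<in> X \<and> f (p s) = 0 \<and> (1 - f s) * d s (p s) = 0"
  shows "generated_by (p ` S) {x\<in>X. f x = 0} d"
  unfolding generated_by_def
proof
  fix y assume "y \<in> {x\<in>X. f x = 0}"
  hence y: "y \<in> X" "f y = 0" by auto
  obtain n xs a where r: "\<forall>i<n. xs i \<in> S" "disjoint_partition_unity n a" "convex_comb d y n xs a"
    by (rule generated_byD[OF gen y(1)])
  have "a i * d y (p (xs i)) = 0" if i: "i < n" for i
  proof -
    have s: "xs i \<in> S" "xs i \<in> X" using r(1) i SX by auto
    have near: "a i * d y (xs i) = 0" using r(3) i by (simp add: convex_comb_def)
    hence "a i * f (xs i) = 0"
      using contractive_annihilator[OF f s(2) y] bool_metric_sym[OF bm s(2) y(1)] by simp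
    moreover have "d (xs i) (p (xs i)) = f (xs i) * d (xs i) (p (xs i))"
      using p[OF s(1)] by (simp add: algebra_simps)
    ultimately have "a i * d (xs i) (p (xs i)) = 0" by (metis mult.assoc mult_zero_left)
    thus ?thesis using annihilator_triangle[OF bm y(1) s(2)] p[OF s(1)] near by blast
  qed
  thus "\<exists>n xs a. (\<forall>i<n. xs i \<in> p ` S) \<and> disjoint_partition_unity n a \<and> convex_comb d y n xs a"
    using r by (intro exI[of _ n] exI[of _ "p \<circ> xs"] exI[of _ a]) (auto simp: convex_comb_def)
qed

theorem CFG_zero_set:
  fixes d :: "'a \<Rightarrow> 'a \<Rightarrow> 'b::comm_ring_1"
  assumes br: "boolean_ring TYPE('b)" and cfg: "CFG_space X d" and f: "contractive_to_B X d f"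
  shows "CFG_space {x\<in>X. f x = 0} d"
proof -
  have bm: "bool_metric_space X d" using cfg by (simp add: CFG_space_iff)
  have bm_zeros: "bool_metric_space {x\<in>X. f x = 0} d"
    by (rule bool_metric_space_subset[OF bm]) blast
  consider "{x\<in>X. f x = 0} = {}" | y0 where "y0 \<in> X" "f y0 = 0" by blast
  then show ?thesis
  proof cases
    case 1
    then show ?thesis using bm_zeros by (simp add: CFG_space_iff)
  next
    case (2 y0)
    hence comb: "has_convex_combinations X d"
      and "\<exists>S. finite S \<and> S \<subseteq> X \<and> generated_by S X d"
      using cfg by (auto simp: CFG_space_iff)
    then obtain S where S: "finite S" "S \<subseteq> X" "generated_by S X d" by blast
    have "\<forall>s\<in>S. \<exists>q. q \<in> X \<and> f q = 0 \<and> (1 - f s) * d s q = 0"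
      using zero_set_retraction[OF br bm comb f 2] S(2) by blast
    from bchoice[OF this] obtain p
      where p: "\<forall>s\<in>S. p s \<in> X \<and> f (p s) = 0 \<and> (1 - f s) * d s (p s) = 0"
      by blast
    have "finite (p ` S)" "p ` S \<subseteq> {x\<in>X. f x = 0}" using S(1) p by auto
    moreover have "generated_by (p ` S) {x\<in>X. f x = 0} d"
      using zero_set_generated[OF bm f S(2,3) p[rule_format]] .
    moreover note bm_zeros zero_set_has_convex_combinations[OF comb f]
    ultimately show ?thesis
      unfolding CFG_space_iff by (intro conjI disjI2 exI[of _ "p ` S"]) simp_all
  qed
qed

section \<open>CFG-subspaces are zero sets\<close>

lemma distance_product_contractive:
  fixes d :: "'a \<Rightarrow> 'a \<Rightarrow> 'b::comm_ring_1" and k :: nat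
  assumes br: "boolean_ring TYPE('b)" and bm: "bool_metric_space X d"
    and ts: "\<And>i. i < k \<Longrightarrow> ts i \<in> X"
  shows "contractive_to_B X d (\<lambda>x. \<Prod>i<k. d x (ts i))"
  unfolding contractive_to_B_def
proof (intro ballI)
  fix x y assume x: "x \<in> X" and y: "y \<in> X"
  define D where "D = d x y"
  let ?f = "\<lambda>x. \<Prod>i<k. d x (ts i)"
  have "(1 - D) * ?f x = (1 - D) * ?f y"
    unfolding D_def by (rule prod_mult_cong, rule complement_distance_eq[OF br bm x y ts])
  hence "(1 - D) * (?f x + ?f y) = (1 - D) * ?f x + (1 - D) * ?f x"
    by (simp add: algebra_simps)
  hence outside: "(1 - D) * (?f x + ?f y) = 0" using boolean_ring_char_two[OF br] by simp
  have "?f x + ?f y = (?f x + ?f y) * D + (1 - D) * (?f x + ?f y)"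
    by (simp add: algebra_simps)
  hence "(?f x + ?f y) * D = ?f x + ?f y" using outside by simp
  thus "ble (?f x + ?f y) (d x y)" unfolding D_def ble_def .
qed

lemma distance_product_vanishes:
  fixes k :: nat
  assumes xs: "\<forall>j<n. xs j \<in> ts ` {..<k}" and a: "disjoint_partition_unity n a"
    and y: "convex_comb d y n xs a"
  shows "(\<Prod>i<k. d y (ts i)) = 0"
proof (rule partition_annihilator_zero[OF a])
  fix j assume j: "j < n"
  then obtain i where i: "i < k" "xs j = ts i" using xs by auto
  have "(\<Prod>i<k. d y (ts i)) = d y (ts i) * (\<Prod>l\<in>{..<k}-{i}. d y (ts l))"
    using i by (simp add: prod.remove)
  moreover have "a j * d y (ts i) = 0" using y j by (simp add: convex_comb_def i(2)[symmetric])
  ultimately show "a j * (\<Prod>i<k. d y (ts i)) = 0" by (metis mult.assoc mult_zero_left)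
qed

text \<open>A zero of the distance product equals the telescoping combination of the chosen points.\<close>
lemma distance_product_zero_mem:
  fixes d :: "'a \<Rightarrow> 'a \<Rightarrow> 'b::comm_ring_1" and k :: nat
  assumes br: "boolean_ring TYPE('b)" and bm: "bool_metric_space X d"
    and YX: "Y \<subseteq> X" and comb: "has_convex_combinations Y d"
    and ts: "\<And>i. i < k \<Longrightarrow> ts i \<in> Y" and x: "x \<in> X" "(\<Prod>i<k. d x (ts i)) = 0"
  shows "x \<in> Y"
proof -
  define b where "b i = (\<Prod>l<i. d x (ts l)) * (1 - d x (ts i))" for i
  have part: "disjoint_partition_unity k b"
    unfolding b_def using telescoping_partition[OF br x(2)] .
  have "\<forall>i<k. ts i \<in> Y" using ts by blast
  then obtain y where y: "y \<in> Y" "convex_comb d y k ts b"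
    by (rule has_convex_combinationsD[OF comb _ part])
  have "b i * d x y = 0" if i: "i < k" for i
  proof (rule annihilator_triangle[OF bm x(1)])
    show "ts i \<in> X" "y \<in> X" using ts[OF i] y(1) YX by auto
    show "b i * d x (ts i) = 0"
      using boolean_ring_complement[OF br, of "d x (ts i)"] by (simp add: b_def mult.assoc)
    show "b i * d (ts i) y = 0"
      using y(2) i bool_metric_sym[OF bm \<open>ts i \<in> X\<close> \<open>y \<in> X\<close>] by (simp add: convex_comb_def)
  qed
  hence "d x y = 0" using partition_annihilator_zero[OF part] by blast
  hence "x = y" using bm x(1) y(1) YX unfolding bool_metric_space_def by blast
  thus ?thesis using y(1) by simp
qed

theorem CFG_subspace_zero_set:
  fixes d :: "'a \<Rightarrow> 'a \<Rightarrow> 'b::comm_ring_1"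
  assumes br: "boolean_ring TYPE('b)" and bm: "bool_metric_space X d"
    and YX: "Y \<subseteq> X" and cfgY: "CFG_space Y d"
  shows "\<exists>f :: 'a \<Rightarrow> 'b. contractive_to_B X d f \<and> Y = {x\<in>X. f x = 0}"
proof (cases "Y = {}")
  case True
  have "contractive_to_B X d (\<lambda>_. 1)"
    using boolean_ring_char_two[OF br, of 1] by (simp add: contractive_to_B_def ble_def)
  then show ?thesis using True by auto
next
  case False
  then obtain T where comb: "has_convex_combinations Y d"
    and T: "finite T" "T \<subseteq> Y" "generated_by T Y d"
    using cfgY by (auto simp: CFG_space_iff)
  obtain k and ts :: "nat \<Rightarrow> 'a" where kt: "T = ts ` {..<k}"
    using T(1) by (metis finite_conv_nat_seg_image lessThan_def)
  have tsY: "\<And>i. i < k \<Longrightarrow> ts i \<in> Y" using kt T(2) by auto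
  define f where "f x = (\<Prod>i<k. d x (ts i))" for x
  have "contractive_to_B X d f"
    unfolding f_def by (rule distance_product_contractive[OF br bm]) (use tsY YX in blast)
  moreover have "Y \<subseteq> {x\<in>X. f x = 0}"
  proof
    fix y assume y: "y \<in> Y"
    then obtain n xs a where "\<forall>i<n. xs i \<in> T" "disjoint_partition_unity n a"
      "convex_comb d y n xs a"
      by (rule generated_byD[OF T(3)])
    hence "f y = 0" unfolding f_def kt by (rule distance_product_vanishes)
    thus "y \<in> {x\<in>X. f x = 0}" using y YX by blast
  qed
  moreover have "{x\<in>X. f x = 0} \<subseteq> Y"
    using distance_product_zero_mem[OF br bm YX comb, of k ts] tsY unfolding f_def by blast
  ultimately show ?thesis by blast
qed

theorem mainTheorem7:
  fixes X Y :: "'a set" and d :: "'a \<Rightarrow> 'a \<Rightarrow> 'b::comm_ring_1"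
  assumes "boolean_ring TYPE('b)"
    and "CFG_space X d"
    and "Y \<subseteq> X"
  shows "CFG_space Y d \<longleftrightarrow>
         (\<exists>f :: 'a \<Rightarrow> 'b. contractive_to_B X d f \<and> Y = {x\<in>X. f x = 0})"
proof
  assume "CFG_space Y d"
  moreover have "bool_metric_space X d" using assms(2) by (simp add: CFG_space_def)
  ultimately show "\<exists>f. contractive_to_B X d f \<and> Y = {x\<in>X. f x = 0}"
    using CFG_subspace_zero_set assms(1,3) by blast
next
  assume "\<exists>f. contractive_to_B X d f \<and> Y = {x\<in>X. f x = 0}"
  then show "CFG_space Y d" using CFG_zero_set assms(1,2) by blast
qed

end
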